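(* In the stochastic epidemic model described in the context, let $u(k)=K\,I(k)$ for all $k\ge0$ with a constant gain $0\le K\le (1-d_{\max})/v_{\max}$. Then: (i) $0\le I(k)\le (1+\delta_{\max}-Kv_{\min})^kI_0$ for all $k\ge1$ with probability one; (ii) if $K<(1-d_{\max})/v_{\max}$, then $I(k)>0$ for all $k\ge1$ with probability one.
   Context: Time is indexed by days $k=0,1,2,\dots$. Let $(\delta(k))_{k\ge0}$, $(d_I(k))_{k\ge0}$, $(v(k))_{k\ge0}$ be three mutually independent sequences of random variables, each sequence i.i.d. in $k$, with $0\le \delta(k)\le \delta_{\max}$, $0\le d_I(k)\le d_{\max}$ where $d_{\max}<1$, and $0<v_{\min}\le v(k)\le v_{\max}\le 1$. Given a control sequence $u(k)$, the cases evolve by $S(k+1)=S(k)-\delta(k)I(k)$, $I(k+1)=(1+\delta(k))I(k)-v(k)u(k)-d_I(k)I(k)$, $R(k+1)=R(k)+v(k)u(k)$, $D(k+1)=D(k)+d_I(k)I(k)$, with $S(0)=S_0$, $I(0)=I_0>0$, $R(0)=D(0)=0$, $I_0\delta_{\max}<S_0$. *)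

theory Defs
  imports "HOL-Probability.Probability"
begin

text \<open>Deterministic trajectory of the discrete-time SIRD model for one realisation of the
  random sequences.\<close>

fun sird :: "(nat \<Rightarrow> real) \<Rightarrow> (nat \<Rightarrow> real) \<Rightarrow> (nat \<Rightarrow> real) \<Rightarrow>
             (nat \<Rightarrow> real \<times> real \<times> real \<times> real \<Rightarrow> real) \<Rightarrow> real \<Rightarrow> real \<Rightarrow> nat \<Rightarrow>
             real \<times> real \<times> real \<times> real" where
  "sird \<delta> dI v ctrl S0 I0 0 = (S0, I0, 0, 0)"
| "sird \<delta> dI v ctrl S0 I0 (Suc k) =
     (let (S, I, R, D) = sird \<delta> dI v ctrl S0 I0 k;
          u = ctrl k (S, I, R, D)
      in (S - \<delta> k * I,
          (1 + \<delta> k) * I - v k * u - dI k * I,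
          R + v k * u,
          D + dI k * I))"

definition infected :: "(nat \<Rightarrow> real) \<Rightarrow> (nat \<Rightarrow> real) \<Rightarrow> (nat \<Rightarrow> real) \<Rightarrow>
             (nat \<Rightarrow> real \<times> real \<times> real \<times> real \<Rightarrow> real) \<Rightarrow> real \<Rightarrow> real \<Rightarrow> nat \<Rightarrow> real" where
  "infected \<delta> dI v ctrl S0 I0 k = fst (snd (sird \<delta> dI v ctrl S0 I0 k))"

text \<open>The three sequences packed into one family indexed by (sequence id, day):
  0 = delta, 1 = d_I, 2 = v (any other id reused as v).\<close>
definition seq_family :: "(nat \<Rightarrow> 'a \<Rightarrow> real) \<Rightarrow> (nat \<Rightarrow> 'a \<Rightarrow> real) \<Rightarrow> (nat \<Rightarrow> 'a \<Rightarrow> real)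
    \<Rightarrow> nat \<times> nat \<Rightarrow> 'a \<Rightarrow> real" where
  "seq_family \<delta> dI v = (\<lambda>(j, k). if j = 0 then \<delta> k else if j = 1 then dI k else v k)"

end

theory Submission
  imports Defs
begin

text \<open>Under the feedback u = K I the infected compartment evolves linearly,
  I(k+1) = (1 + \<delta>(k) - K v(k) - d_I(k)) I(k), so I(k) is I0 times a product of growth factors.
  The bounds on the random coefficients place every factor in [0, 1 + \<delta>max - K vmin], and
  strictly above 0 when K vmax < 1 - dmax; almost surely these bounds hold on all (countably
  many) days at once. The argument is pathwise.\<close>

lemma infected_linear_feedback:
  "infected d di w (\<lambda>_ (S, I, R, D). K * I) S0 I0 k = I0 * (\<Prod>j<k. 1 + d j - K * w j - di j)"
proof (induction k)
  case 0
  then show ?case by (simp add: infected_def)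
next
  case (Suc k)
  then show ?case
    unfolding infected_def
    by (cases "sird d di w (\<lambda>_ (S, I, R, D). K * I) S0 I0 k") (simp add: algebra_simps)
qed

lemma growth_factor_bounds:
  fixes d di w K :: real
  assumes "0 \<le> d" "d \<le> \<delta>max" "0 \<le> di" "di \<le> dmax" "vmin \<le> w" "w \<le> vmax"
    and "0 \<le> K" "K * vmax \<le> 1 - dmax"
  shows "0 \<le> 1 + d - K * w - di" and "1 + d - K * w - di \<le> 1 + \<delta>max - K * vmin"
proof -
  have "K * w \<le> K * vmax" and "K * vmin \<le> K * w"
    using assms by (simp_all add: mult_left_mono)
  then show "0 \<le> 1 + d - K * w - di" and "1 + d - K * w - di \<le> 1 + \<delta>max - K * vmin"
    using assms by linarith+
qed

lemma growth_factor_pos: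
  fixes d di w K :: real
  assumes "0 \<le> d" "di \<le> dmax" "w \<le> vmax" "0 \<le> K" "K * vmax < 1 - dmax"
  shows "0 < 1 + d - K * w - di"
proof -
  have "K * w \<le> K * vmax"
    using assms by (simp add: mult_left_mono)
  then show ?thesis
    using assms by linarith
qed

lemma infected_linear_feedback_bounds:
  fixes d di w :: "nat \<Rightarrow> real"
  assumes "\<And>j. 0 \<le> d j \<and> d j \<le> \<delta>max" "\<And>j. 0 \<le> di j \<and> di j \<le> dmax"
    "\<And>j. vmin \<le> w j \<and> w j \<le> vmax"
    and "0 \<le> K" "K * vmax \<le> 1 - dmax" "0 \<le> I0"
  shows "0 \<le> infected d di w (\<lambda>_ (S, I, R, D). K * I) S0 I0 k
    \<and> infected d di w (\<lambda>_ (S, I, R, D). K * I) S0 I0 k \<le> (1 + \<delta>max - K * vmin) ^ k * I0"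
proof -
  note factor = growth_factor_bounds[OF _ _ _ _ _ _ \<open>0 \<le> K\<close> \<open>K * vmax \<le> 1 - dmax\<close>]
  have "0 \<le> (\<Prod>j<k. 1 + d j - K * w j - di j)"
    using factor(1) assms(1-3) by (meson prod_nonneg)
  moreover have "(\<Prod>j<k. 1 + d j - K * w j - di j) \<le> (\<Prod>j<k. 1 + \<delta>max - K * vmin)"
    using factor assms(1-3) by (meson prod_mono)
  ultimately show ?thesis
    unfolding infected_linear_feedback using \<open>0 \<le> I0\<close>
    by (simp add: mult.commute mult_left_mono)
qed

lemma infected_linear_feedback_pos:
  fixes d di w :: "nat \<Rightarrow> real"
  assumes "\<And>j. 0 \<le> d j" "\<And>j. di j \<le> dmax" "\<And>j. w j \<le> vmax"
    and "0 \<le> K" "K * vmax < 1 - dmax" "0 < I0"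
  shows "0 < infected d di w (\<lambda>_ (S, I, R, D). K * I) S0 I0 k"
  using assms growth_factor_pos[OF assms(1-3)]
  by (simp add: infected_linear_feedback prod_pos)

theorem lemma6:
  fixes M :: "'a measure"
    and \<delta> dI v :: "nat \<Rightarrow> 'a \<Rightarrow> real"
    and \<delta>max dmax vmin vmax S0 I0 K :: real
  assumes "prob_space M"
    and meas: "\<And>k. \<delta> k \<in> borel_measurable M" "\<And>k. dI k \<in> borel_measurable M"
              "\<And>k. v k \<in> borel_measurable M"
    and indep: "prob_space.indep_vars M (\<lambda>_. borel) (seq_family \<delta> dI v) ({0, 1, 2} \<times> UNIV)"
    and ident: "\<And>k. distr M borel (\<delta> k) = distr M borel (\<delta> 0)"
               "\<And>k. distr M borel (dI k) = distr M borel (dI 0)"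
               "\<And>k. distr M borel (v k) = distr M borel (v 0)"
    and bd_delta: "\<And>k. AE \<omega> in M. 0 \<le> \<delta> k \<omega> \<and> \<delta> k \<omega> \<le> \<delta>max"
    and bd_d: "\<And>k. AE \<omega> in M. 0 \<le> dI k \<omega> \<and> dI k \<omega> \<le> dmax"
    and bd_v: "\<And>k. AE \<omega> in M. vmin \<le> v k \<omega> \<and> v k \<omega> \<le> vmax"
    and "dmax < 1" and "0 < vmin" and "vmin \<le> vmax" and "vmax \<le> 1"
    and "I0 > 0" and "I0 * \<delta>max < S0"
    and K: "0 \<le> K" "K \<le> (1 - dmax) / vmax"
  shows "(AE \<omega> in M. \<forall>k\<ge>1.
            0 \<le> infected (\<lambda>j. \<delta> j \<omega>) (\<lambda>j. dI j \<omega>) (\<lambda>j. v j \<omega>) (\<lambda>_ (S, I, R, D). K * I) S0 I0 k \<and>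
            infected (\<lambda>j. \<delta> j \<omega>) (\<lambda>j. dI j \<omega>) (\<lambda>j. v j \<omega>) (\<lambda>_ (S, I, R, D). K * I) S0 I0 k
              \<le> (1 + \<delta>max - K * vmin) ^ k * I0)
       \<and> (K < (1 - dmax) / vmax \<longrightarrow>
          (AE \<omega> in M. \<forall>k\<ge>1.
            0 < infected (\<lambda>j. \<delta> j \<omega>) (\<lambda>j. dI j \<omega>) (\<lambda>j. v j \<omega>) (\<lambda>_ (S, I, R, D). K * I) S0 I0 k))"
proof -
  let ?I = "\<lambda>\<omega>. infected (\<lambda>j. \<delta> j \<omega>) (\<lambda>j. dI j \<omega>) (\<lambda>j. v j \<omega>) (\<lambda>_ (S, I, R, D). K * I) S0 I0"
  have "0 < vmax"
    using \<open>0 < vmin\<close> \<open>vmin \<le> vmax\<close> by linarith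
  then have K_vmax: "K * vmax \<le> 1 - dmax"
    and K_vmax_strict: "K < (1 - dmax) / vmax \<longleftrightarrow> K * vmax < 1 - dmax"
    using K(2) by (simp_all add: pos_le_divide_eq pos_less_divide_eq)
  have "AE \<omega> in M. \<forall>j. (0 \<le> \<delta> j \<omega> \<and> \<delta> j \<omega> \<le> \<delta>max) \<and> (0 \<le> dI j \<omega> \<and> dI j \<omega> \<le> dmax)
      \<and> (vmin \<le> v j \<omega> \<and> v j \<omega> \<le> vmax)"
    using bd_delta bd_d bd_v by (simp add: AE_all_countable AE_conj_iff)
  then have "AE \<omega> in M. \<forall>k. 0 \<le> ?I \<omega> k \<and> ?I \<omega> k \<le> (1 + \<delta>max - K * vmin) ^ k * I0
      \<and> (K * vmax < 1 - dmax \<longrightarrow> 0 < ?I \<omega> k)"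
  proof eventually_elim
    case (elim \<omega>)
    then have coefficients: "\<And>j. 0 \<le> \<delta> j \<omega> \<and> \<delta> j \<omega> \<le> \<delta>max"
      "\<And>j. 0 \<le> dI j \<omega> \<and> dI j \<omega> \<le> dmax" "\<And>j. vmin \<le> v j \<omega> \<and> v j \<omega> \<le> vmax"
      by auto
    show ?case
      using coefficients infected_linear_feedback_bounds[OF coefficients K(1) K_vmax less_imp_le[OF \<open>I0 > 0\<close>]]
      by (auto intro!: infected_linear_feedback_pos[OF _ _ _ K(1) _ \<open>I0 > 0\<close>])
  qed
  then show ?thesis
    unfolding K_vmax_strict by (auto elim: AE_mp)
qed

end
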